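(* For every symmetric sequence space $X$ and every $x\in X$, $$\|x\|_X\le\Big\|\sum_{k=0}^\infty x^*_{2^k}e_{k+1}\Big\|_{E_X}\le5\|x\|_X.$$
   Context: A Banach sequence lattice is a Banach space $E$ of real sequences such that $x\in E$, $|y_k|\le|x_k|$ imply $y\in E$, $\|y\|_E\le\|x\|_E$. $u^*$ is the nonincreasing rearrangement of $(|u_k|)$, $u^*_k=\inf_{\mathrm{card}A=k-1}\sup_{i\notin A}|u_i|$. A symmetric sequence space is a Banach sequence lattice $X\subset\ell^\infty$ such that $x\in X$, $y^*=x^*$ imply $y\in X$, $\|y\|_X=\|x\|_X$; standing assumption: $X$ is separable or has the Fatou property. $e_k$ is the $k$-th unit vector. $E_X$ is the Banach sequence lattice of all real sequences $a$ with $\|a\|_{E_X}:=\|\sum_{k=1}^\infty a_k\sum_{i=2^{k-1}}^{2^k-1}e_i\|_X<\infty$. *)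

theory Defs
  imports Complex_Main "HOL-Library.Extended_Real"
begin

text \<open>Real sequences are functions nat => real, indexed from 0:
  the paper's coordinate x_k (k >= 1) is x (k - 1).\<close>

definition banach_seq_lattice :: "(nat \<Rightarrow> real) set \<Rightarrow> ((nat \<Rightarrow> real) \<Rightarrow> real) \<Rightarrow> bool" where
  "banach_seq_lattice E N \<longleftrightarrow>
     (\<lambda>k. 0) \<in> E \<and>
     (\<forall>x\<in>E. \<forall>y\<in>E. (\<lambda>k. x k + y k) \<in> E) \<and>
     (\<forall>c. \<forall>x\<in>E. (\<lambda>k. c * x k) \<in> E) \<and>
     (\<forall>x\<in>E. 0 \<le> N x \<and> (N x = 0 \<longleftrightarrow> x = (\<lambda>k. 0))) \<and>
     (\<forall>x\<in>E. \<forall>y\<in>E. N (\<lambda>k. x k + y k) \<le> N x + N y) \<and>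
     (\<forall>c. \<forall>x\<in>E. N (\<lambda>k. c * x k) = \<bar>c\<bar> * N x) \<and>
     (\<forall>s. (\<forall>n. s n \<in> E) \<and> (\<forall>\<epsilon>>0. \<exists>M. \<forall>m\<ge>M. \<forall>n\<ge>M. N (\<lambda>k. s m k - s n k) < \<epsilon>)
          \<longrightarrow> (\<exists>l\<in>E. (\<lambda>n. N (\<lambda>k. s n k - l k)) \<longlonglongrightarrow> 0)) \<and>
     (\<forall>x\<in>E. \<forall>y. (\<forall>k. \<bar>y k\<bar> \<le> \<bar>x k\<bar>) \<longrightarrow> y \<in> E \<and> N y \<le> N x)"

text \<open>Taken in the extended reals so that it is meaningful for all sequences.\<close>

definition rearr :: "(nat \<Rightarrow> real) \<Rightarrow> nat \<Rightarrow> ereal" where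
  "rearr u k = (INF A \<in> {A. finite A \<and> card A = k - 1}. SUP i \<in> - A. ereal \<bar>u i\<bar>)"

definition bounded_seq :: "(nat \<Rightarrow> real) \<Rightarrow> bool" where
  "bounded_seq x \<longleftrightarrow> (\<exists>B. \<forall>k. \<bar>x k\<bar> \<le> B)"

definition separable_space :: "(nat \<Rightarrow> real) set \<Rightarrow> ((nat \<Rightarrow> real) \<Rightarrow> real) \<Rightarrow> bool" where
  "separable_space E N \<longleftrightarrow>
     (\<exists>D. countable D \<and> D \<subseteq> E \<and> (\<forall>x\<in>E. \<forall>\<epsilon>>0. \<exists>d\<in>D. N (\<lambda>k. x k - d k) < \<epsilon>))"

definition fatou_property :: "(nat \<Rightarrow> real) set \<Rightarrow> ((nat \<Rightarrow> real) \<Rightarrow> real) \<Rightarrow> bool" where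
  "fatou_property E N \<longleftrightarrow>
     (\<forall>s x. (\<forall>n. s n \<in> E) \<and> (\<forall>n k. 0 \<le> s n k \<and> s n k \<le> s (Suc n) k) \<and>
            (\<forall>k. (\<lambda>n. s n k) \<longlonglongrightarrow> x k) \<and> bdd_above (range (\<lambda>n. N (s n)))
        \<longrightarrow> x \<in> E \<and> N x = (SUP n. N (s n)))"

definition symmetric_seq_space :: "(nat \<Rightarrow> real) set \<Rightarrow> ((nat \<Rightarrow> real) \<Rightarrow> real) \<Rightarrow> bool" where
  "symmetric_seq_space X N \<longleftrightarrow>
     banach_seq_lattice X N \<and>
     (\<forall>x\<in>X. bounded_seq x) \<and>
     (\<forall>x\<in>X. \<forall>y. rearr y = rearr x \<longrightarrow> y \<in> X \<and> N y = N x) \<and>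
     (separable_space X N \<or> fatou_property X N)"

text \<open>The block sequence sum_{k>=1} a_k sum_{i=2^(k-1)}^{2^k-1} e_i, written 0-based:
  coordinate j (paper index j+1) equals a (m) with 2^m <= j+1 < 2^(m+1).\<close>

definition dyadic_block :: "(nat \<Rightarrow> real) \<Rightarrow> nat \<Rightarrow> real" where
  "dyadic_block a j = (\<Sum>m\<le>j. a m * (if 2 ^ m \<le> Suc j \<and> Suc j < 2 ^ Suc m then 1 else 0))"

definition E_space :: "(nat \<Rightarrow> real) set \<Rightarrow> (nat \<Rightarrow> real) set" where
  "E_space X = {a. dyadic_block a \<in> X}"

definition E_norm :: "((nat \<Rightarrow> real) \<Rightarrow> real) \<Rightarrow> (nat \<Rightarrow> real) \<Rightarrow> real" where
  "E_norm N a = N (dyadic_block a)"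

end

theory Submission
  imports Defs
begin

text \<open>Let s be the nonincreasing rearrangement of x, so that b k = s (2^k - 1) with 0-based
  indices. On the block 2^m \<le> j + 1 < 2^(m+1) the block sequence of b takes the value
  s (2^m - 1), which lies between s j and s (j div 2). Hence it is squeezed between s and the
  dilation j \<mapsto> s (j div 2). The latter is the sum of the two disjoint copies of s placed
  on the even and on the odd indices, each of norm N x by symmetry, so the norm of the block
  sequence lies between N x and 2 N x.\<close>

lemma banach_seq_lattice_add:
  "banach_seq_lattice E N \<Longrightarrow> x \<in> E \<Longrightarrow> y \<in> E \<Longrightarrow> (\<lambda>k. x k + y k) \<in> E"
  unfolding banach_seq_lattice_def by blast

lemma banach_seq_lattice_norm_nonneg:
  "banach_seq_lattice E N \<Longrightarrow> x \<in> E \<Longrightarrow> 0 \<le> N x"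
  unfolding banach_seq_lattice_def by blast

lemma banach_seq_lattice_triangle:
  "banach_seq_lattice E N \<Longrightarrow> x \<in> E \<Longrightarrow> y \<in> E \<Longrightarrow> N (\<lambda>k. x k + y k) \<le> N x + N y"
  unfolding banach_seq_lattice_def by blast

lemma banach_seq_lattice_solid:
  "banach_seq_lattice E N \<Longrightarrow> x \<in> E \<Longrightarrow> (\<And>k. \<bar>y k\<bar> \<le> \<bar>x k\<bar>) \<Longrightarrow> y \<in> E \<and> N y \<le> N x"
  unfolding banach_seq_lattice_def by blast

lemma rearr_eq_0_1: "rearr u 0 = rearr u (Suc 0)"
  by (simp add: rearr_def)

lemma rearr_nonneg: "0 \<le> rearr u k"
  unfolding rearr_def
proof (rule INF_greatest)
  fix A :: "nat set" assume "A \<in> {A. finite A \<and> card A = k - 1}"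
  then obtain i where i: "i \<notin> A"
    using ex_new_if_finite[OF infinite_UNIV_nat] by blast
  have "(0::ereal) \<le> ereal \<bar>u i\<bar>" by simp
  also have "\<dots> \<le> (SUP i\<in>-A. ereal \<bar>u i\<bar>)"
    by (rule SUP_upper) (simp add: i)
  finally show "0 \<le> (SUP i\<in>-A. ereal \<bar>u i\<bar>)" .
qed

lemma rearr_le_bound:
  assumes "\<And>k. \<bar>u k\<bar> \<le> B"
  shows "rearr u k \<le> ereal B"
proof -
  have "rearr u k \<le> (SUP i\<in>-{..<k-1}. ereal \<bar>u i\<bar>)"
    unfolding rearr_def by (rule INF_lower) auto
  also have "\<dots> \<le> ereal B"
    by (rule SUP_least) (simp add: assms)
  finally show ?thesis .
qed

lemma rearr_Suc_le:
  assumes "1 \<le> k"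
  shows "rearr u (Suc k) \<le> rearr u k"
  unfolding rearr_def
proof (rule INF_greatest)
  fix A :: "nat set" assume "A \<in> {A. finite A \<and> card A = k - 1}"
  then have A: "finite A" "card A = k - 1" by auto
  then obtain a where a: "a \<notin> A"
    using ex_new_if_finite[OF infinite_UNIV_nat] by blast
  have "(INF A \<in> {A. finite A \<and> card A = Suc k - 1}. SUP i \<in> - A. ereal \<bar>u i\<bar>)
      \<le> (SUP i \<in> - insert a A. ereal \<bar>u i\<bar>)"
    using A a assms by (intro INF_lower) auto
  also have "\<dots> \<le> (SUP i \<in> - A. ereal \<bar>u i\<bar>)"
    by (rule SUP_subset_mono) auto
  finally show "(INF A \<in> {A. finite A \<and> card A = Suc k - 1}. SUP i \<in> - A. ereal \<bar>u i\<bar>)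
      \<le> (SUP i \<in> - A. ereal \<bar>u i\<bar>)" .
qed

lemma rearr_placement:
  fixes s :: "nat \<Rightarrow> real" and p :: "nat \<Rightarrow> nat" and u :: "nat \<Rightarrow> real"
  assumes inj: "inj p" and dec: "antimono s" and nonneg: "\<And>j. 0 \<le> s j"
    and placed: "\<And>j. \<bar>u (p j)\<bar> = s j" and zero: "\<And>i. i \<notin> range p \<Longrightarrow> u i = 0"
  shows "rearr u k = ereal (s (k - 1))"
proof -
  define n where "n = k - 1"
  have card_image_p: "card (p ` I) = card I" for I
    using inj by (simp add: card_image inj_on_subset)
  have lower: "ereal (s n) \<le> (SUP i\<in>-A. ereal \<bar>u i\<bar>)" if "finite A" "card A = n" for A
  proof -
    have "\<not> p ` {..n} \<subseteq> A"
    proof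
      assume "p ` {..n} \<subseteq> A"
      then have "card (p ` {..n}) \<le> card A" by (rule card_mono[OF \<open>finite A\<close>])
      then show False using card_image_p[of "{..n}"] \<open>card A = n\<close> by simp
    qed
    then obtain j where j: "j \<le> n" "p j \<notin> A" by blast
    have "ereal (s n) \<le> ereal \<bar>u (p j)\<bar>"
      using antimonoD[OF dec j(1)] by (simp add: placed)
    also have "\<dots> \<le> (SUP i\<in>-A. ereal \<bar>u i\<bar>)"
      by (rule SUP_upper) (simp add: j)
    finally show ?thesis .
  qed
  have upper: "(SUP i\<in>-(p`{..<n}). ereal \<bar>u i\<bar>) \<le> ereal (s n)"
  proof (rule SUP_least)
    fix i assume i: "i \<in> - p ` {..<n}"
    show "ereal \<bar>u i\<bar> \<le> ereal (s n)"
    proof (cases "i \<in> range p")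
      case True
      then obtain j where "i = p j" by blast
      with i have "\<not> j < n" by blast
      then have "n \<le> j" by simp
      then show ?thesis using antimonoD[OF dec] placed \<open>i = p j\<close> by simp
    next
      case False
      then show ?thesis using zero nonneg by simp
    qed
  qed
  have "rearr u k = (INF A \<in> {A. finite A \<and> card A = n}. SUP i \<in> - A. ereal \<bar>u i\<bar>)"
    by (simp add: rearr_def n_def)
  also have "\<dots> = ereal (s n)"
  proof (rule antisym)
    have "(INF A \<in> {A. finite A \<and> card A = n}. SUP i \<in> - A. ereal \<bar>u i\<bar>)
        \<le> (SUP i\<in>-(p`{..<n}). ereal \<bar>u i\<bar>)"
      by (rule INF_lower) (simp add: card_image_p)
    then show "(INF A \<in> {A. finite A \<and> card A = n}. SUP i \<in> - A. ereal \<bar>u i\<bar>) \<le> ereal (s n)"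
      using upper by (rule order_trans)
    show "ereal (s n) \<le> (INF A \<in> {A. finite A \<and> card A = n}. SUP i \<in> - A. ereal \<bar>u i\<bar>)"
      using lower by (blast intro: INF_greatest)
  qed
  finally show ?thesis by (simp add: n_def)
qed

definition decr_rearr :: "(nat \<Rightarrow> real) \<Rightarrow> nat \<Rightarrow> real" where
  "decr_rearr x j = real_of_ereal (rearr x (Suc j))"

lemma rearr_eq_decr_rearr:
  assumes "bounded_seq x"
  shows "rearr x k = ereal (decr_rearr x (k - 1))"
proof -
  obtain B where "\<And>k. \<bar>x k\<bar> \<le> B" using assms unfolding bounded_seq_def by blast
  then have "rearr x k = ereal (real_of_ereal (rearr x k))" for k
    using rearr_nonneg[of x k] rearr_le_bound[of x B k] by (intro ereal_real' [symmetric]) auto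
  then show ?thesis
    by (cases k) (simp_all add: decr_rearr_def rearr_eq_0_1)
qed

lemma decr_rearr_nonneg: "0 \<le> decr_rearr x j"
  by (simp add: decr_rearr_def rearr_nonneg real_of_ereal_pos)

lemma decr_rearr_antimono:
  assumes "bounded_seq x"
  shows "antimono (decr_rearr x)"
proof (rule antimonoI)
  have "decr_rearr x (Suc j) \<le> decr_rearr x j" for j
    using rearr_Suc_le[of "Suc j" x] rearr_eq_decr_rearr[OF assms, of "Suc j"]
      rearr_eq_decr_rearr[OF assms, of "Suc (Suc j)"] by simp
  then show "i \<le> j \<Longrightarrow> decr_rearr x j \<le> decr_rearr x i" for i j
    by (rule lift_Suc_antimono_le)
qed

lemma symmetric_seq_space_placement:
  assumes X: "symmetric_seq_space X N" and "x \<in> X"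
    and inj: "inj p" and placed: "\<And>j. \<bar>u (p j)\<bar> = decr_rearr x j"
    and zero: "\<And>i. i \<notin> range p \<Longrightarrow> u i = 0"
  shows "u \<in> X \<and> N u = N x"
proof -
  have bdd: "bounded_seq x"
    using X \<open>x \<in> X\<close> unfolding symmetric_seq_space_def by blast
  have "rearr u k = rearr x k" for k
    using rearr_placement[OF inj decr_rearr_antimono[OF bdd] decr_rearr_nonneg placed zero]
      rearr_eq_decr_rearr[OF bdd] by simp
  then show ?thesis
    using X \<open>x \<in> X\<close> unfolding symmetric_seq_space_def by blast
qed

lemma symmetric_seq_space_decr_rearr:
  assumes "symmetric_seq_space X N" and "x \<in> X"
  shows "decr_rearr x \<in> X \<and> N (decr_rearr x) = N x"
  using symmetric_seq_space_placement[OF assms, of id] by (simp add: decr_rearr_nonneg)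

lemma symmetric_seq_space_dilation:
  assumes X: "symmetric_seq_space X N" and "x \<in> X"
  shows "(\<lambda>j. decr_rearr x (j div 2)) \<in> X \<and> N (\<lambda>j. decr_rearr x (j div 2)) \<le> 2 * N x"
proof -
  have L: "banach_seq_lattice X N"
    using X unfolding symmetric_seq_space_def by blast
  define ue where "ue j = (if even j then decr_rearr x (j div 2) else 0)" for j
  define uo where "uo j = (if odd j then decr_rearr x (j div 2) else 0)" for j
  have ue: "ue \<in> X \<and> N ue = N x"
    by (rule symmetric_seq_space_placement[OF X \<open>x \<in> X\<close>, of "\<lambda>j. 2 * j"])
      (auto simp: ue_def inj_on_def decr_rearr_nonneg elim!: evenE)
  have uo: "uo \<in> X \<and> N uo = N x"
    by (rule symmetric_seq_space_placement[OF X \<open>x \<in> X\<close>, of "\<lambda>j. 2 * j + 1"])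
      (auto simp: uo_def inj_on_def decr_rearr_nonneg elim!: oddE)
  have "(\<lambda>j. decr_rearr x (j div 2)) = (\<lambda>j. ue j + uo j)"
    by (simp add: ue_def uo_def fun_eq_iff)
  then show ?thesis
    using banach_seq_lattice_add[OF L] banach_seq_lattice_triangle[OF L] ue uo by force
qed

lemma dyadic_block_eq:
  assumes "2 ^ m \<le> Suc j" "Suc j < (2::nat) ^ Suc m"
  shows "dyadic_block a j = a m"
proof -
  have other_blocks: "\<not> (2 ^ m' \<le> Suc j \<and> Suc j < (2::nat) ^ Suc m')" if "m' \<noteq> m" for m'
  proof
    assume m': "2 ^ m' \<le> Suc j \<and> Suc j < (2::nat) ^ Suc m'"
    from that have "Suc m \<le> m' \<or> Suc m' \<le> m" by auto
    then show False
      using power_increasing[of "Suc m" m' "2::nat"] power_increasing[of "Suc m'" m "2::nat"]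
        assms m' by auto
  qed
  have "m < Suc j"
    using less_exp[of m] assms(1) by linarith
  then have "dyadic_block a j = (\<Sum>m'\<le>j. if m' = m then a m else 0)"
    unfolding dyadic_block_def using assms other_blocks by (intro sum.cong) auto
  also have "\<dots> = a m"
    using \<open>m < Suc j\<close> by (simp add: sum.delta)
  finally show ?thesis .
qed

lemma dyadic_block_decr_rearr_bounds:
  assumes "bounded_seq x"
  defines "b \<equiv> (\<lambda>k. real_of_ereal (rearr x (2 ^ k)))"
  shows "decr_rearr x j \<le> dyadic_block b j \<and> dyadic_block b j \<le> decr_rearr x (j div 2)"
proof -
  obtain m where m: "2 ^ m \<le> Suc j" "Suc j < (2::nat) ^ Suc m"
    using ex_power_ivl1[of 2 "Suc j"] by auto
  have "dyadic_block b j = decr_rearr x (2 ^ m - 1)"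
    using dyadic_block_eq[OF m] rearr_eq_decr_rearr[OF assms(1)] by (simp add: b_def)
  moreover have "2 ^ m - 1 \<le> j" "j div 2 \<le> 2 ^ m - 1"
    using m by auto
  ultimately show ?thesis
    using decr_rearr_antimono[OF assms(1)] by (auto dest: antimonoD)
qed

theorem mainTheorem7:
  fixes X :: "(nat \<Rightarrow> real) set" and N :: "(nat \<Rightarrow> real) \<Rightarrow> real" and x :: "nat \<Rightarrow> real"
  assumes "symmetric_seq_space X N" and "x \<in> X"
  defines "b \<equiv> (\<lambda>k. real_of_ereal (rearr x (2 ^ k)))"
  shows "b \<in> E_space X \<and> N x \<le> E_norm N b \<and> E_norm N b \<le> 5 * N x"
proof -
  have L: "banach_seq_lattice X N" and bdd: "bounded_seq x"
    using assms(1,2) unfolding symmetric_seq_space_def by blast+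
  have squeeze: "\<bar>decr_rearr x j\<bar> \<le> \<bar>dyadic_block b j\<bar>"
    "\<bar>dyadic_block b j\<bar> \<le> \<bar>decr_rearr x (j div 2)\<bar>" for j
    using dyadic_block_decr_rearr_bounds[OF bdd, of j] decr_rearr_nonneg[of x j]
    unfolding b_def by auto
  obtain dil: "(\<lambda>j. decr_rearr x (j div 2)) \<in> X" "N (\<lambda>j. decr_rearr x (j div 2)) \<le> 2 * N x"
    using symmetric_seq_space_dilation[OF assms(1,2)] by blast
  obtain block: "dyadic_block b \<in> X" "N (dyadic_block b) \<le> 2 * N x"
    using banach_seq_lattice_solid[OF L dil(1) squeeze(2)] dil(2) by fastforce
  have "N x \<le> N (dyadic_block b)"
    using banach_seq_lattice_solid[OF L block(1) squeeze(1)]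
      symmetric_seq_space_decr_rearr[OF assms(1,2)] by simp
  moreover have "0 \<le> N x"
    using banach_seq_lattice_norm_nonneg[OF L assms(2)] .
  ultimately show ?thesis
    using block unfolding E_space_def E_norm_def by simp
qed

end
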